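(* Let $\mathcal X$ be finite with $|\mathcal X|\ge n\ge1$, $s:2^{\mathcal X}\to\mathbb R$ non-negative, monotone and submodular, $d$ a metric on $\mathcal X$ with sum-dispersion $\mathrm{div}$, $\lambda>0$, $\alpha\in(0,1]$. If $B_n$ is the output of an $\alpha$-approximate greedy run for $\tilde a=\tfrac12s+\lambda\,\mathrm{div}$ with cardinality $n$, then $a(B_n)\ge\frac\alpha2\max_{B\subseteq\mathcal X,|B|=n}a(B)$, where $a=s+\lambda\,\mathrm{div}$.
   Context: Marginal gain: $\Delta_f(x\mid B):=f(B\cup\{x\})-f(B)$. $s$ is monotone if $\Delta_s(x\mid B)\ge0$ for all $B$, $x\notin B$; non-negative if $s\ge0$; submodular if $\Delta_s(x\mid B')\ge\Delta_s(x\mid B)$ for all $B'\subseteq B\subseteq\mathcal X$ and $x\in\mathcal X\setminus B$. Sum-dispersion: $\mathrm{div}(B):=\frac12\sum_{x\in B}\sum_{x'\in B}d(x,x')$. An $\alpha$-approximate greedy run for $f$ with cardinality $n$: $B_0=\emptyset$ and for $i=0,\dots,n-1$ an element $x_i\in\mathcal X\setminus B_i$ is chosen with $\Delta_f(x_i\mid B_i)\ge\alpha\max_{x\in\mathcal X\setminus B_i}\Delta_f(x\mid B_i)$, and $B_{i+1}=B_i\cup\{x_i\}$; its output is $B_n$. *)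

theory Defs
  imports Main "HOL-Library.FuncSet" Complex_Main
begin

definition marginal_gain :: "('a set \<Rightarrow> real) \<Rightarrow> 'a \<Rightarrow> 'a set \<Rightarrow> real" where
  "marginal_gain f x B = f (B \<union> {x}) - f B"

definition monotone_setfun :: "'a set \<Rightarrow> ('a set \<Rightarrow> real) \<Rightarrow> bool" where
  "monotone_setfun X f \<longleftrightarrow>
     (\<forall>B x. B \<subseteq> X \<and> x \<in> X - B \<longrightarrow> marginal_gain f x B \<ge> 0)"

definition nonneg_setfun :: "'a set \<Rightarrow> ('a set \<Rightarrow> real) \<Rightarrow> bool" where
  "nonneg_setfun X f \<longleftrightarrow> (\<forall>B. B \<subseteq> X \<longrightarrow> f B \<ge> 0)"

definition submodular_setfun :: "'a set \<Rightarrow> ('a set \<Rightarrow> real) \<Rightarrow> bool" where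
  "submodular_setfun X f \<longleftrightarrow>
     (\<forall>B' B x. B' \<subseteq> B \<and> B \<subseteq> X \<and> x \<in> X - B \<longrightarrow>
        marginal_gain f x B' \<ge> marginal_gain f x B)"

definition metric_on :: "'a set \<Rightarrow> ('a \<Rightarrow> 'a \<Rightarrow> real) \<Rightarrow> bool" where
  "metric_on X d \<longleftrightarrow>
     (\<forall>x\<in>X. \<forall>y\<in>X. d x y \<ge> 0 \<and> (d x y = 0 \<longleftrightarrow> x = y) \<and> d x y = d y x) \<and>
     (\<forall>x\<in>X. \<forall>y\<in>X. \<forall>z\<in>X. d x z \<le> d x y + d y z)"

definition sum_dispersion :: "('a \<Rightarrow> 'a \<Rightarrow> real) \<Rightarrow> 'a set \<Rightarrow> real" where
  "sum_dispersion d B = (1/2) * (\<Sum>x\<in>B. \<Sum>x'\<in>B. d x x')"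

text \<open>An alpha-approximate greedy run for f with cardinality n, given by the sequence of
  chosen elements x_0, ..., x_{n-1}; B_i is the set of the first i chosen elements.\<close>
definition approx_greedy_run ::
  "'a set \<Rightarrow> ('a set \<Rightarrow> real) \<Rightarrow> real \<Rightarrow> nat \<Rightarrow> (nat \<Rightarrow> 'a) \<Rightarrow> bool" where
  "approx_greedy_run X f \<alpha> n xs \<longleftrightarrow>
     (\<forall>i<n. xs i \<in> X - xs ` {..<i} \<and>
        marginal_gain f (xs i) (xs ` {..<i}) \<ge>
          \<alpha> * Max ((\<lambda>x. marginal_gain f x (xs ` {..<i})) ` (X - xs ` {..<i})))"

end

theory Submission
  imports Defs
begin

text \<open>Let \<open>Q\<close> be an optimal \<open>n\<close>-set and \<open>S\<^sub>i\<close> the greedy set after \<open>i\<close> steps. Averaging the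
  marginal gains of \<open>f = s/2 + \<lambda> div\<close> over \<open>Q - S\<^sub>i\<close> bounds the best gain from below: submodularity
  gives \<open>(s Q - s S\<^sub>i) / (2n)\<close>, and the triangle inequality shows that the distances from \<open>Q - S\<^sub>i\<close>
  to \<open>S\<^sub>i\<close> recover an \<open>i / (n(n-1))\<close> fraction of \<open>div Q\<close> per element. Summing the \<open>\<alpha>\<close>-approximate
  gains over \<open>i < n\<close> yields \<open>f S\<^sub>n \<ge> \<alpha> (s Q - s S\<^sub>n + \<lambda> div Q) / 2\<close>, and adding the missing
  \<open>s S\<^sub>n / 2\<close> gives the factor \<open>\<alpha>/2\<close>.\<close>

definition cross_dispersion :: "('a \<Rightarrow> 'a \<Rightarrow> real) \<Rightarrow> 'a set \<Rightarrow> 'a set \<Rightarrow> real" where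
  "cross_dispersion d P Q = (\<Sum>x\<in>P. \<Sum>y\<in>Q. d x y)"

lemma sum_dispersion_eq_cross_dispersion: "sum_dispersion d B = cross_dispersion d B B / 2"
  by (simp add: sum_dispersion_def cross_dispersion_def)

lemma metric_on_nonneg: "metric_on X d \<Longrightarrow> x \<in> X \<Longrightarrow> y \<in> X \<Longrightarrow> d x y \<ge> 0"
  unfolding metric_on_def by blast

lemma metric_on_self: "metric_on X d \<Longrightarrow> x \<in> X \<Longrightarrow> d x x = 0"
  unfolding metric_on_def by blast

lemma metric_on_sym: "metric_on X d \<Longrightarrow> x \<in> X \<Longrightarrow> y \<in> X \<Longrightarrow> d x y = d y x"
  unfolding metric_on_def by blast

lemma metric_on_triangle:
  "metric_on X d \<Longrightarrow> x \<in> X \<Longrightarrow> y \<in> X \<Longrightarrow> z \<in> X \<Longrightarrow> d x z \<le> d x y + d y z"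
  unfolding metric_on_def by blast

lemma cross_dispersion_Un_left:
  "finite P \<Longrightarrow> finite P' \<Longrightarrow> P \<inter> P' = {} \<Longrightarrow>
    cross_dispersion d (P \<union> P') Q = cross_dispersion d P Q + cross_dispersion d P' Q"
  by (simp add: cross_dispersion_def sum.union_disjoint)

lemma cross_dispersion_Un_right:
  "finite Q \<Longrightarrow> finite Q' \<Longrightarrow> Q \<inter> Q' = {} \<Longrightarrow>
    cross_dispersion d P (Q \<union> Q') = cross_dispersion d P Q + cross_dispersion d P Q'"
  by (simp add: cross_dispersion_def sum.union_disjoint sum.distrib)

lemma cross_dispersion_commute:
  assumes "metric_on X d" "P \<subseteq> X" "Q \<subseteq> X"
  shows "cross_dispersion d P Q = cross_dispersion d Q P"
proof -
  have "cross_dispersion d P Q = (\<Sum>y\<in>Q. \<Sum>x\<in>P. d x y)"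
    unfolding cross_dispersion_def by (rule sum.swap)
  also have "\<dots> = cross_dispersion d Q P"
    unfolding cross_dispersion_def by (intro sum.cong refl) (metis assms metric_on_sym subsetD)
  finally show ?thesis .
qed

lemma cross_dispersion_nonneg:
  "metric_on X d \<Longrightarrow> P \<subseteq> X \<Longrightarrow> Q \<subseteq> X \<Longrightarrow> cross_dispersion d P Q \<ge> 0"
  unfolding cross_dispersion_def by (intro sum_nonneg) (meson metric_on_nonneg subsetD)

text \<open>Route every distance \<open>d u v\<close> with \<open>u \<noteq> v\<close> through \<open>w\<close>.\<close>
lemma cross_dispersion_self_le_via_point:
  assumes m: "metric_on X d" and fin: "finite Y" and YX: "Y \<subseteq> X" and w: "w \<in> X"
  shows "cross_dispersion d Y Y \<le> 2 * (real (card Y) - 1) * (\<Sum>u\<in>Y. d u w)"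
proof -
  have sym: "(\<Sum>v\<in>Y. d w v) = (\<Sum>u\<in>Y. d u w)"
    by (intro sum.cong refl) (metis m metric_on_sym w YX subsetD)
  have row: "(\<Sum>v\<in>Y. d u v) \<le> (real (card Y) - 2) * d u w + (\<Sum>v\<in>Y. d w v)" if u: "u \<in> Y" for u
  proof -
    have uX: "u \<in> X" using u YX by auto
    have "(\<Sum>v\<in>Y. d u v) = (\<Sum>v\<in>Y-{u}. d u v)"
      using sum.remove[OF fin u, of "d u"] metric_on_self[OF m uX] by simp
    also have "\<dots> \<le> (\<Sum>v\<in>Y-{u}. d u w + d w v)"
      by (intro sum_mono) (meson m metric_on_triangle uX w YX DiffD1 subsetD)
    also have "\<dots> = real (card Y - 1) * d u w + ((\<Sum>v\<in>Y. d w v) - d w u)"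
      using fin u by (simp add: sum.distrib sum_diff1)
    also have "real (card Y - 1) = real (card Y) - 1"
      using fin u by (metis Suc_leI card_gt_0_iff empty_iff of_nat_1 of_nat_diff One_nat_def)
    also have "d w u = d u w" using m metric_on_sym uX w by metis
    finally show ?thesis by (simp add: algebra_simps)
  qed
  have "cross_dispersion d Y Y \<le> (\<Sum>u\<in>Y. (real (card Y) - 2) * d u w + (\<Sum>v\<in>Y. d w v))"
    unfolding cross_dispersion_def by (intro sum_mono row)
  also have "\<dots> = 2 * (real (card Y) - 1) * (\<Sum>u\<in>Y. d u w)"
    unfolding sym by (simp add: sum.distrib flip: sum_distrib_left) (simp add: algebra_simps)
  finally show ?thesis .
qed

lemma cross_dispersion_self_le:
  assumes m: "metric_on X d" and "finite Y" "Y \<subseteq> X" "finite W" "W \<subseteq> X"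
  shows "real (card W) * cross_dispersion d Y Y \<le> 2 * (real (card Y) - 1) * cross_dispersion d Y W"
proof -
  have "real (card W) * cross_dispersion d Y Y = (\<Sum>w\<in>W. cross_dispersion d Y Y)" by simp
  also have "\<dots> \<le> (\<Sum>w\<in>W. 2 * (real (card Y) - 1) * (\<Sum>u\<in>Y. d u w))"
    using assms by (intro sum_mono cross_dispersion_self_le_via_point[OF m]) auto
  also have "\<dots> = 2 * (real (card Y) - 1) * cross_dispersion d Y W"
    unfolding cross_dispersion_def by (simp add: sum_distrib_left sum.swap[of _ W])
  finally show ?thesis .
qed

text \<open>The three hypotheses are combined with the multipliers \<open>i\<close>, \<open>c - b\<close> and \<open>n\<close>; what remains
  is a sum of non-negative terms.\<close>
lemma dispersion_counting_inequality:
  fixes a b c n i DAA DCC DAC DCB :: real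
  assumes "n = a + c" "i = a + b" "b + 1 \<le> c" "a \<ge> 0" "b \<ge> 0" "DAC \<ge> 0" "DCB \<ge> 0"
    and h1: "c * DAA \<le> 2 * (a - 1) * DAC"
    and h2: "a * DCC \<le> 2 * (c - 1) * DAC"
    and h3: "b * DCC \<le> 2 * (c - 1) * DCB"
  shows "c * i * (DAA + DCC + 2 * DAC) \<le> 2 * n * (n - 1) * (DAC + DCB)"
proof -
  have "i * (c * DAA) \<le> i * (2 * (a - 1) * DAC)"
    using h1 assms by (intro mult_left_mono) auto
  moreover have "(c - b) * (a * DCC) \<le> (c - b) * (2 * (c - 1) * DAC)"
    using h2 assms by (intro mult_left_mono) auto
  moreover have "n * (b * DCC) \<le> n * (2 * (c - 1) * DCB)"
    using h3 assms by (intro mult_left_mono) auto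
  moreover have "0 \<le> (c - b) * a * DAC" "0 \<le> n * a * DCB"
    using assms by simp_all
  moreover have "2 * n * (n - 1) * (DAC + DCB) - c * i * (DAA + DCC + 2 * DAC)
     = (i * (2 * (a - 1) * DAC) - i * (c * DAA))
       + ((c - b) * (2 * (c - 1) * DAC) - (c - b) * (a * DCC))
       + (n * (2 * (c - 1) * DCB) - n * (b * DCC)) + 2 * ((c - b) * a * DAC) + 2 * (n * a * DCB)"
    unfolding assms(1,2) by (simp add: algebra_simps)
  ultimately show ?thesis by linarith
qed

lemma cross_dispersion_Diff_lower_bound:
  assumes m: "metric_on X d" and "finite S" "S \<subseteq> X" "finite Q" "Q \<subseteq> X"
    and lt: "card S < card Q"
  shows "real (card (Q - S)) * real (card S) * cross_dispersion d Q Q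
           \<le> 2 * real (card Q) * (real (card Q) - 1) * cross_dispersion d (Q - S) S"
proof -
  define A B C where "A = Q \<inter> S" and "B = S - Q" and "C = Q - S"
  have fin: "finite A" "finite B" "finite C" and sub: "A \<subseteq> X" "B \<subseteq> X" "C \<subseteq> X"
    using assms unfolding A_def B_def C_def by auto
  have Q_eq: "Q = A \<union> C" and S_eq: "S = A \<union> B" and "A \<inter> C = {}" "A \<inter> B = {}"
    unfolding A_def B_def C_def by auto
  then have cQ: "card Q = card A + card C" and cS: "card S = card A + card B"
    using fin by (simp_all add: card_Un_disjoint)
  have CA: "cross_dispersion d C A = cross_dispersion d A C"
    using cross_dispersion_commute[OF m] sub by metis
  have DQQ: "cross_dispersion d Q Q
      = cross_dispersion d A A + cross_dispersion d C C + 2 * cross_dispersion d A C"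
    unfolding Q_eq using fin \<open>A \<inter> C = {}\<close> CA by (simp add: cross_dispersion_Un_left cross_dispersion_Un_right)
  have DCS: "cross_dispersion d C S = cross_dispersion d A C + cross_dispersion d C B"
    unfolding S_eq using fin \<open>A \<inter> B = {}\<close> CA by (simp add: cross_dispersion_Un_right)
  have "real (card C) * real (card S) *
          (cross_dispersion d A A + cross_dispersion d C C + 2 * cross_dispersion d A C)
        \<le> 2 * real (card Q) * (real (card Q) - 1) * (cross_dispersion d A C + cross_dispersion d C B)"
  proof (rule dispersion_counting_inequality)
    show "real (card C) * cross_dispersion d A A \<le> 2 * (real (card A) - 1) * cross_dispersion d A C"
      using cross_dispersion_self_le[OF m] fin sub by blast
    show "real (card A) * cross_dispersion d C C \<le> 2 * (real (card C) - 1) * cross_dispersion d A C"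
      using cross_dispersion_self_le[OF m, of C A] fin sub CA by simp
    show "real (card B) * cross_dispersion d C C \<le> 2 * (real (card C) - 1) * cross_dispersion d C B"
      using cross_dispersion_self_le[OF m] fin sub by blast
  qed (use cQ cS lt cross_dispersion_nonneg[OF m] sub in auto)
  then show ?thesis using DQQ DCS unfolding C_def by simp
qed

lemma marginal_gain_sum_dispersion:
  assumes m: "metric_on X d" and "finite S" "S \<subseteq> X" "v \<in> X" "v \<notin> S"
  shows "marginal_gain (sum_dispersion d) v S = (\<Sum>y\<in>S. d v y)"
proof -
  have "(\<Sum>x\<in>S. d x v) = (\<Sum>y\<in>S. d v y)"
    by (intro sum.cong refl) (metis m metric_on_sym assms(3,4) subsetD)
  then show ?thesis
    using assms metric_on_self[OF m \<open>v \<in> X\<close>]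
    by (simp add: marginal_gain_def sum_dispersion_def sum.distrib field_simps)
qed

lemma monotone_setfun_le_Un:
  assumes mono: "monotone_setfun X s" and "finite D"
  shows "B \<union> D \<subseteq> X \<Longrightarrow> s B \<le> s (B \<union> D)"
  using \<open>finite D\<close>
proof (induction D rule: finite_induct)
  case (insert x D)
  then have IH: "s B \<le> s (B \<union> D)" by auto
  show ?case
  proof (cases "x \<in> B \<union> D")
    case True
    then show ?thesis using IH by (simp add: insert_absorb)
  next
    case False
    then have "marginal_gain s x (B \<union> D) \<ge> 0"
      using mono insert.prems unfolding monotone_setfun_def by auto
    then show ?thesis using IH unfolding marginal_gain_def by simp
  qed
qed simp

lemma submodular_setfun_diff_le_sum_marginal_gain:
  assumes sub: "submodular_setfun X s" and "finite C"
  shows "S \<union> C \<subseteq> X \<Longrightarrow> S \<inter> C = {} \<Longrightarrow> s (S \<union> C) - s S \<le> (\<Sum>v\<in>C. marginal_gain s v S)"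
  using \<open>finite C\<close>
proof (induction C rule: finite_induct)
  case (insert x C)
  then have "s (S \<union> C) - s S \<le> (\<Sum>v\<in>C. marginal_gain s v S)" by auto
  moreover have "marginal_gain s x (S \<union> C) \<le> marginal_gain s x S"
    using sub insert.prems insert.hyps unfolding submodular_setfun_def by auto
  ultimately show ?case using insert.hyps unfolding marginal_gain_def by simp
qed simp

lemma card_Diff_mult_le_sum_marginal_gain:
  assumes mono: "monotone_setfun X s" and sub: "submodular_setfun X s"
    and "finite S" "S \<subseteq> X" "finite Q" "Q \<subseteq> X"
  shows "real (card (Q - S)) * (s Q - s S) \<le> real (card Q) * (\<Sum>v\<in>Q-S. marginal_gain s v S)"
proof -
  let ?T = "\<Sum>v\<in>Q-S. marginal_gain s v S"
  have "s Q \<le> s (Q \<union> S)" using monotone_setfun_le_Un[OF mono] assms by auto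
  also have "Q \<union> S = S \<union> (Q - S)" by auto
  also have "s (S \<union> (Q - S)) - s S \<le> ?T"
    by (rule submodular_setfun_diff_le_sum_marginal_gain[OF sub]) (use assms in auto)
  finally have T_ge: "s Q - s S \<le> ?T" by simp
  have T_nonneg: "0 \<le> ?T"
    using mono assms unfolding monotone_setfun_def by (intro sum_nonneg) auto
  have card_le: "card (Q - S) \<le> card Q" using assms by (simp add: card_mono)
  show ?thesis
  proof (cases "s Q - s S \<ge> 0")
    case True
    then show ?thesis using T_ge card_le by (intro mult_mono) auto
  next
    case False
    then show ?thesis using T_nonneg by (smt (verit) mult_nonneg_nonneg mult_nonneg_nonpos of_nat_0_le_iff)
  qed
qed

text \<open>The best marginal gain of \<open>f = s/2 + \<lambda> div\<close> at \<open>S\<close> is at least its average over \<open>Q - S\<close>.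
  For \<open>card Q = 1\<close> the second summand is \<open>0 / 0 = 0\<close>, harmlessly, since then \<open>card S = 0\<close>.\<close>
lemma Max_marginal_gain_ge:
  assumes "finite X" and mono: "monotone_setfun X s" and sub: "submodular_setfun X s"
    and m: "metric_on X d" and "lam \<ge> 0"
    and S: "S \<subseteq> X" and Q: "Q \<subseteq> X" and lt: "card S < card Q"
  defines "f \<equiv> \<lambda>B. (1/2) * s B + lam * sum_dispersion d B"
  shows "(s Q - s S) / (2 * real (card Q))
           + lam * real (card S) * sum_dispersion d Q / (real (card Q) * (real (card Q) - 1))
         \<le> Max ((\<lambda>x. marginal_gain f x S) ` (X - S))"
    (is "?L \<le> ?M")
proof -
  define C where "C = Q - S"
  let ?n = "real (card Q)"
  have fin: "finite S" "finite Q" "finite C" and CX: "C \<subseteq> X - S"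
    using \<open>finite X\<close> S Q unfolding C_def by (auto intro: finite_subset)
  have "C \<noteq> {}"
    using lt fin card_mono[of S Q] unfolding C_def by auto
  then have c_pos: "real (card C) > 0" using fin by auto
  have n_pos: "?n > 0" using lt by simp
  have gain: "marginal_gain f v S = (1/2) * marginal_gain s v S + lam * (\<Sum>y\<in>S. d v y)"
    if "v \<in> X - S" for v
    using marginal_gain_sum_dispersion[OF m fin(1) S, of v] that
    unfolding f_def marginal_gain_def by (simp add: algebra_simps)
  have "real (card C) * ((s Q - s S) / (2 * ?n)) \<le> (1/2) * (\<Sum>v\<in>C. marginal_gain s v S)"
    using card_Diff_mult_le_sum_marginal_gain[OF mono sub fin(1) S fin(2) Q] n_pos
    unfolding C_def by (simp add: field_simps)
  moreover have "real (card C) * (lam * real (card S) * sum_dispersion d Q / (?n * (?n - 1)))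
                 \<le> lam * cross_dispersion d C S"
  proof (cases "card Q = 1")
    case True
    have "cross_dispersion d C S \<ge> 0" using cross_dispersion_nonneg[OF m] CX S by blast
    then show ?thesis using True \<open>lam \<ge> 0\<close> by simp
  next
    case False
    then have "?n * (?n - 1) > 0" using lt by simp
    then have "real (card C) * real (card S) * sum_dispersion d Q / (?n * (?n - 1))
               \<le> cross_dispersion d C S"
      using cross_dispersion_Diff_lower_bound[OF m fin(1) S fin(2) Q lt]
      unfolding C_def sum_dispersion_eq_cross_dispersion by (simp add: divide_le_eq algebra_simps)
    then show ?thesis using \<open>lam \<ge> 0\<close> mult_left_mono by (fastforce simp: algebra_simps)
  qed
  moreover have "(\<Sum>v\<in>C. marginal_gain f v S)
      = (1/2) * (\<Sum>v\<in>C. marginal_gain s v S) + lam * cross_dispersion d C S"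
    using gain CX by (simp add: sum.distrib sum_distrib_left cross_dispersion_def subset_iff)
  ultimately have "real (card C) * ?L \<le> (\<Sum>v\<in>C. marginal_gain f v S)"
    unfolding distrib_left by linarith
  also have "\<dots> \<le> real (card C) * ?M"
    using sum_bounded_above[of C "\<lambda>v. marginal_gain f v S" ?M] CX \<open>finite X\<close>
    by (fastforce intro: Max_ge)
  finally show ?thesis using c_pos by simp
qed

lemma approx_greedy_run_subset_card:
  assumes run: "approx_greedy_run X f \<alpha> n xs" and "i \<le> n"
  shows "xs ` {..<i} \<subseteq> X" "card (xs ` {..<i}) = i"
proof -
  have chosen: "xs j \<in> X - xs ` {..<j}" if "j < n" for j
    using run that unfolding approx_greedy_run_def by blast
  show "xs ` {..<i} \<subseteq> X" using chosen \<open>i \<le> n\<close> by fastforce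
  show "card (xs ` {..<i}) = i"
    using \<open>i \<le> n\<close> by (induction i) (use chosen in \<open>auto simp: lessThan_Suc card_insert_if\<close>)
qed

lemma approx_greedy_run_gain_ge:
  assumes run: "approx_greedy_run X f \<alpha> n xs" and "\<alpha> \<ge> 0"
    and L: "\<And>i. i < n \<Longrightarrow> L i \<le> Max ((\<lambda>x. marginal_gain f x (xs ` {..<i})) ` (X - xs ` {..<i}))"
  shows "\<alpha> * (\<Sum>i<n. L i) \<le> f (xs ` {..<n}) - f {}"
proof -
  have "\<alpha> * L i \<le> f (xs ` {..<Suc i}) - f (xs ` {..<i})" if "i < n" for i
  proof -
    have "\<alpha> * L i \<le> marginal_gain f (xs i) (xs ` {..<i})"
      using run that L[OF that] mult_left_mono[OF _ \<open>\<alpha> \<ge> 0\<close>]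
      unfolding approx_greedy_run_def by (meson order_trans)
    then show ?thesis by (simp add: marginal_gain_def lessThan_Suc Un_commute)
  qed
  then have "(\<Sum>i<n. \<alpha> * L i) \<le> (\<Sum>i<n. f (xs ` {..<Suc i}) - f (xs ` {..<i}))"
    by (intro sum_mono) auto
  also have "\<dots> = f (xs ` {..<n}) - f {}"
    by (subst sum_lessThan_telescope) simp
  finally show ?thesis by (simp add: sum_distrib_left)
qed

lemma sum_lessThan_of_nat: "(\<Sum>i<n. real i) = real n * (real n - 1) / 2"
  by (induction n) (auto simp: field_simps)

lemma approx_greedy_run_diversified_ge:
  assumes "finite X" "monotone_setfun X s" "submodular_setfun X s" "metric_on X d"
    and "lam \<ge> 0" "\<alpha> \<ge> 0" and "1 \<le> n" and Q: "Q \<subseteq> X" "card Q = n"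
    and run: "approx_greedy_run X (\<lambda>B. (1/2) * s B + lam * sum_dispersion d B) \<alpha> n xs"
  shows "\<alpha> * ((s Q - s (xs ` {..<n})) / 2 + lam * sum_dispersion d Q / 2)
           \<le> (1/2) * s (xs ` {..<n}) + lam * sum_dispersion d (xs ` {..<n}) - s {} / 2"
proof -
  let ?f = "\<lambda>B. (1/2) * s B + lam * sum_dispersion d B"
  let ?S = "\<lambda>i. xs ` {..<i}"
  have S: "?S i \<subseteq> X" "card (?S i) = i" if "i \<le> n" for i
    using approx_greedy_run_subset_card[OF run that] by simp_all
  define K where "K = lam * sum_dispersion d Q / (real n * (real n - 1))"
  have gains: "\<alpha> * (\<Sum>i<n. (s Q - s (?S n)) / (2 * real n) + K * real i) \<le> ?f (?S n) - ?f {}"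
  proof (rule approx_greedy_run_gain_ge[OF run \<open>\<alpha> \<ge> 0\<close>])
    fix i assume "i < n"
    then have "?S i \<subseteq> ?S n" by auto
    then have "s (?S i) \<le> s (?S n)"
      using monotone_setfun_le_Un[OF assms(2), where B = "?S i" and D = "?S n"] S(1)[of n]
      by (simp add: sup.absorb2)
    then have "(s Q - s (?S n)) / (2 * real n) \<le> (s Q - s (?S i)) / (2 * real n)"
      by (intro divide_right_mono) auto
    moreover have "(s Q - s (?S i)) / (2 * real n) + K * real i
                   \<le> Max ((\<lambda>x. marginal_gain ?f x (?S i)) ` (X - ?S i))"
      using Max_marginal_gain_ge[OF assms(1-5) S(1) Q(1), of i] S(2)[of i] Q \<open>i < n\<close>
      by (simp add: K_def mult.commute[of _ "real i"] mult.assoc)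
    ultimately show "(s Q - s (?S n)) / (2 * real n) + K * real i
                     \<le> Max ((\<lambda>x. marginal_gain ?f x (?S i)) ` (X - ?S i))"
      by linarith
  qed
  have K_sum: "K * (\<Sum>i<n. real i) = lam * sum_dispersion d Q / 2"
  proof (cases "n = 1")
    case True
    then obtain q where "Q = {q}" using Q(2) card_1_singletonE by blast
    then show ?thesis using True metric_on_self[OF assms(4)] Q(1) by (simp add: sum_dispersion_def)
  next
    case False
    then show ?thesis using \<open>1 \<le> n\<close> by (simp add: K_def sum_lessThan_of_nat)
  qed
  show ?thesis
    using gains \<open>1 \<le> n\<close> sum_dispersion_def[of d "{}"]
    by (simp add: sum.distrib K_sum flip: sum_distrib_left)
qed

theorem mainTheorem13:
  fixes X :: "'a set" and s :: "'a set \<Rightarrow> real" and d :: "'a \<Rightarrow> 'a \<Rightarrow> real"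
    and n :: nat and lam \<alpha> :: real and xs :: "nat \<Rightarrow> 'a"
  assumes "finite X" and "1 \<le> n" and "n \<le> card X"
    and "nonneg_setfun X s" and "monotone_setfun X s" and "submodular_setfun X s"
    and "metric_on X d"
    and "lam > 0" and "0 < \<alpha>" and "\<alpha> \<le> 1"
    and "approx_greedy_run X (\<lambda>B. (1/2) * s B + lam * sum_dispersion d B) \<alpha> n xs"
  shows "s (xs ` {..<n}) + lam * sum_dispersion d (xs ` {..<n}) \<ge>
           (\<alpha> / 2) * Max ((\<lambda>B. s B + lam * sum_dispersion d B) ` {B. B \<subseteq> X \<and> card B = n})"
proof -
  let ?a = "\<lambda>B. s B + lam * sum_dispersion d B"
  let ?Sn = "xs ` {..<n}"
  let ?M = "{B. B \<subseteq> X \<and> card B = n}"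
  have "finite ?M"
    using \<open>finite X\<close> by (simp add: finite_Collect_subsets)
  moreover have "?M \<noteq> {}"
    using obtain_subset_with_card_n[OF \<open>n \<le> card X\<close>] by blast
  ultimately have "Max (?a ` ?M) \<in> ?a ` ?M" by simp
  then obtain Q where Q: "Q \<subseteq> X" "card Q = n" and opt: "Max (?a ` ?M) = ?a Q" by auto
  have "\<alpha> * ((s Q - s ?Sn) / 2 + lam * sum_dispersion d Q / 2)
          \<le> (1/2) * s ?Sn + lam * sum_dispersion d ?Sn - s {} / 2"
    using approx_greedy_run_diversified_ge[OF assms(1,5,6,7) _ _ _ Q assms(11)] assms(2,8,9) by simp
  moreover have "0 \<le> s {}" "0 \<le> (1 - \<alpha>) * s ?Sn"
    using assms(4,10) approx_greedy_run_subset_card[OF assms(11), of n]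
    unfolding nonneg_setfun_def by auto
  moreover have "\<alpha> / 2 * ?a Q = \<alpha> * ((s Q - s ?Sn) / 2 + lam * sum_dispersion d Q / 2) + \<alpha> * s ?Sn / 2"
    by (simp add: field_simps)
  moreover have "(1 - \<alpha>) * s ?Sn = s ?Sn - \<alpha> * s ?Sn"
    by (simp add: algebra_simps)
  ultimately show ?thesis
    unfolding opt by argo
qed

end
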